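(* There exist an open interval $(\theta^-,\theta^+)$ containing $0$ and a unique continuously differentiable function $\gamma:(\theta^-,\theta^+)\to\mathbb{R}$ with $\gamma(0)=0$ such that $f_{\mathrm{comp}}(\gamma(\theta),\theta)=0$ and $\mathbf{f}_{\mathrm{mv}}(\gamma(\theta),\theta)>\mathbf{0}$ (componentwise) for all $\theta\in(\theta^-,\theta^+)$. Moreover $\gamma$ is analytic and $$\gamma'(\theta)=\frac{|\mathbf{t}_1^r|}{|\mathbf{t}_4^r|}\,\frac{\mathbf{t}_2^d(\gamma(\theta))\cdot(\mathbf{t}_3^d(\theta)\times\mathbf{t}_4^r)}{\mathbf{t}_1^r\cdot(\mathbf{t}_2^d(\gamma(\theta))\times\mathbf{t}_3^d(\theta))}.$$
   Context: Fix $\mathbf{t}_1^r,\dots,\mathbf{t}_4^r\in\mathbb{R}^3$ with $\mathbf{t}_i^r\cdot(\mathbf{t}_j^r\times\mathbf{t}_k^r)\neq0$ for $ijk\in\{123,234,341,412\}$. For nonzero $\mathbf{t}\in\mathbb{R}^3$ and $\varphi\in\mathbb{R}$ let $\mathbf{R}_{\mathbf{t}}(\varphi):=|\mathbf{t}|^{-2}\mathbf{t}\otimes\mathbf{t}+\cos\varphi(\mathbf{I}-|\mathbf{t}|^{-2}\mathbf{t}\otimes\mathbf{t})+|\mathbf{t}|^{-1}\sin\varphi(\mathbf{t}\times)$ (counterclockwise rotation about $\mathbf{t}$ by $\varphi$), where $(\mathbf{a}\times)\mathbf{b}=\mathbf{a}\times\mathbf{b}$. Set $\mathbf{t}_1^d:=\mathbf{t}_1^r$,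 $\mathbf{t}_4^d:=\mathbf{t}_4^r$, $\mathbf{t}_2^d(\gamma):=\mathbf{R}_{\mathbf{t}_1^r}(\gamma)\mathbf{t}_2^r$, $\mathbf{t}_3^d(\theta):=\mathbf{R}_{\mathbf{t}_4^r}(\theta)\mathbf{t}_3^r$. Define $f_{\mathrm{comp}}(\gamma,\theta):=\mathbf{t}_2^d(\gamma)\cdot\mathbf{t}_3^d(\theta)-\mathbf{t}_2^r\cdot\mathbf{t}_3^r$ and $\mathbf{f}_{\mathrm{mv}}(\gamma,\theta)\in\mathbb{R}^4$ with components $[\mathbf{t}_1^d\cdot(\mathbf{t}_2^d(\gamma)\times\mathbf{t}_3^d(\theta))][\mathbf{t}_1^r\cdot(\mathbf{t}_2^r\times\mathbf{t}_3^r)]$, $[\mathbf{t}_2^d(\gamma)\cdot(\mathbf{t}_3^d(\theta)\times\mathbf{t}_4^d)][\mathbf{t}_2^r\cdot(\mathbf{t}_3^r\times\mathbf{t}_4^r)]$, $[\mathbf{t}_3^d(\theta)\cdot(\mathbf{t}_4^d\times\mathbf{t}_1^d)][\mathbf{t}_3^r\cdot(\mathbf{t}_4^r\times\mathbf{t}_1^r)]$, $[\mathbf{t}_4^d\cdot(\mathbf{t}_1^d\times\mathbf{t}_2^d(\gamma))][\mathbf{t}_4^r\cdot(\mathbf{t}_1^r\times\mathbf{t}_2^r)]$. *)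

theory Defs
  imports "HOL-Analysis.Analysis"
begin

definition triple :: "real^3 \<Rightarrow> real^3 \<Rightarrow> real^3 \<Rightarrow> real" where
  "triple a b c = a \<bullet> cross3 b c"

text \<open>R_t(phi) applied to v: counterclockwise rotation of v about t by phi,
  i.e. (|t|^-2 t(x)t + cos phi (I - |t|^-2 t(x)t) + |t|^-1 sin phi (t x)) v.\<close>
definition rot :: "real^3 \<Rightarrow> real \<Rightarrow> real^3 \<Rightarrow> real^3" where
  "rot t \<phi> v = ((t \<bullet> v) / (norm t)\<^sup>2) *\<^sub>R t
      + cos \<phi> *\<^sub>R (v - ((t \<bullet> v) / (norm t)\<^sup>2) *\<^sub>R t)
      + (sin \<phi> / norm t) *\<^sub>R cross3 t v"

definition t2d :: "real^3 \<Rightarrow> real^3 \<Rightarrow> real \<Rightarrow> real^3" where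
  "t2d t1 t2 \<gamma> = rot t1 \<gamma> t2"

definition t3d :: "real^3 \<Rightarrow> real^3 \<Rightarrow> real \<Rightarrow> real^3" where
  "t3d t4 t3 \<theta> = rot t4 \<theta> t3"

definition f_comp :: "real^3 \<Rightarrow> real^3 \<Rightarrow> real^3 \<Rightarrow> real^3 \<Rightarrow> real \<Rightarrow> real \<Rightarrow> real" where
  "f_comp t1 t2 t3 t4 \<gamma> \<theta> = t2d t1 t2 \<gamma> \<bullet> t3d t4 t3 \<theta> - t2 \<bullet> t3"

text \<open>The four components of f_mv, indexed 1..4 (as i = 0..3).\<close>
definition f_mv :: "real^3 \<Rightarrow> real^3 \<Rightarrow> real^3 \<Rightarrow> real^3 \<Rightarrow> real \<Rightarrow> real \<Rightarrow> nat \<Rightarrow> real" where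
  "f_mv t1 t2 t3 t4 \<gamma> \<theta> i =
     (let d1 = t1; d2 = t2d t1 t2 \<gamma>; d3 = t3d t4 t3 \<theta>; d4 = t4 in
      if i = 0 then triple d1 d2 d3 * triple t1 t2 t3
      else if i = 1 then triple d2 d3 d4 * triple t2 t3 t4
      else if i = 2 then triple d3 d4 d1 * triple t3 t4 t1
      else triple d4 d1 d2 * triple t4 t1 t2)"

definition real_analytic_on :: "(real \<Rightarrow> real) \<Rightarrow> real set \<Rightarrow> bool" where
  "real_analytic_on f S \<longleftrightarrow>
     (\<forall>x\<in>S. \<exists>r>0. \<exists>c::nat \<Rightarrow> real. \<forall>y. \<bar>y - x\<bar> < r \<longrightarrow> (\<lambda>n. c n * (y - x) ^ n) sums f y)"

end

theory Submission
  imports Defs "HOL-Complex_Analysis.Complex_Analysis"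
begin

text \<open>Both rotations act linearly, so \<open>f_comp (\<gamma>, \<theta>) = A \<theta> cos \<gamma> + B \<theta> sin \<gamma> - C \<theta>\<close> with
  first-order trigonometric polynomials \<open>A, B, C\<close>, and the first component of \<open>f_mv\<close> has the sign of
  \<open>T (B cos \<gamma> - A sin \<gamma>)\<close>, where \<open>T = t1 \<cdot> (t2 \<times> t3)\<close>. On the side singled out by that sign the
  half-angle substitution solves the equation explicitly,
  \<open>\<gamma> \<theta> = 2 s arctan ((C - A) / (s B + sqrt (A\<^sup>2 + B\<^sup>2 - C\<^sup>2)))\<close> with \<open>s = sgn T\<close>.
  This branch is the restriction of a holomorphic function, hence analytic, and any other continuous
  solution with the same sign differs from it by a continuous multiple of \<open>2\<pi>\<close>, hence agrees with it.
  Differentiating the constraint \<open>t2d (\<gamma> \<theta>) \<cdot> t3d \<theta> = t2 \<cdot> t3\<close>, where a rotation about \<open>t\<close> has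
  derivative \<open>(t \<times> \<cdot>) / |t|\<close>, gives the formula for \<open>\<gamma>'\<close>.\<close>

section \<open>The equation \<open>a cos x + b sin x = c\<close>\<close>

lemma cos_2arctan: "cos (2 * arctan t) = (1 - t\<^sup>2) / (1 + t\<^sup>2)"
  and sin_2arctan: "sin (2 * arctan t) = 2 * t / (1 + t\<^sup>2)"
proof -
  have p: "0 < 1 + t\<^sup>2" by (simp add: add_pos_nonneg)
  have sq: "(sqrt (1 + t\<^sup>2))\<^sup>2 = 1 + t\<^sup>2" using p by simp
  show "cos (2 * arctan t) = (1 - t\<^sup>2) / (1 + t\<^sup>2)"
    unfolding cos_double cos_arctan sin_arctan using p sq by (simp add: power_divide field_simps)
  show "sin (2 * arctan t) = 2 * t / (1 + t\<^sup>2)"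
    unfolding sin_double cos_arctan sin_arctan using p sq
    by (simp add: power_divide field_simps power2_eq_square)
qed

text \<open>The branch of the solution of \<open>a cos x + b sin x = c\<close> with \<open>s (b cos x - a sin x) > 0\<close>,
  obtained from the substitution \<open>t = tan (s x / 2)\<close>.\<close>
definition trig_root :: "real \<Rightarrow> real \<Rightarrow> real \<Rightarrow> real \<Rightarrow> real" where
  "trig_root s a b c = s * 2 * arctan ((c - a) / (s * b + sqrt (a\<^sup>2 + b\<^sup>2 - c\<^sup>2)))"

lemma trig_root_same [simp]: "trig_root s a b a = 0"
  by (simp add: trig_root_def)

lemma trig_root:
  assumes s: "\<bar>s\<bar> = 1" and sb: "0 < s * b" and disc: "c\<^sup>2 < a\<^sup>2 + b\<^sup>2"
  defines "x \<equiv> trig_root s a b c"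
  shows "a * cos x + b * sin x = c" and "s * (b * cos x - a * sin x) = sqrt (a\<^sup>2 + b\<^sup>2 - c\<^sup>2)"
proof -
  define D where "D = sqrt (a\<^sup>2 + b\<^sup>2 - c\<^sup>2)"
  define B where "B = s * b"
  define q where "q = B + D"
  define t where "t = (c - a) / q"
  have s1: "s = 1 \<or> s = -1" using s by linarith
  then have ss: "s * (s * y) = y" for y by auto
  have bB: "b = s * B" unfolding B_def using ss by simp
  have D2: "D\<^sup>2 = a\<^sup>2 + B\<^sup>2 - c\<^sup>2" unfolding D_def B_def using disc s1 by auto
  have q: "q > 0" unfolding q_def B_def D_def using sb disc by (simp add: add_pos_nonneg)
  have p: "0 < 1 + t\<^sup>2" by (simp add: add_pos_nonneg)
  have cx: "cos x * (1 + t\<^sup>2) = 1 - t\<^sup>2" and sx: "s * sin x * (1 + t\<^sup>2) = 2 * t"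
  proof -
    have x: "x = s * (2 * arctan t)" by (simp add: x_def trig_root_def t_def q_def B_def D_def)
    show "cos x * (1 + t\<^sup>2) = 1 - t\<^sup>2" using s1 p unfolding x by (auto simp: cos_2arctan)
    show "s * sin x * (1 + t\<^sup>2) = 2 * t" using s1 p unfolding x by (auto simp: sin_2arctan)
  qed
  have halfangle: "u * cos x + v * (s * sin x) = w"
    if "u * (q\<^sup>2 - (c - a)\<^sup>2) + 2 * v * (c - a) * q = w * (q\<^sup>2 + (c - a)\<^sup>2)" for u v w
  proof -
    have "(u * cos x + v * (s * sin x)) * (1 + t\<^sup>2)
        = u * (cos x * (1 + t\<^sup>2)) + v * (s * sin x * (1 + t\<^sup>2))"
      by (simp add: algebra_simps)
    also have "\<dots> = u * (1 - t\<^sup>2) + 2 * v * t"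
      unfolding cx sx by simp
    finally have "(u * cos x + v * (s * sin x)) * (1 + t\<^sup>2) = u * (1 - t\<^sup>2) + 2 * v * t" .
    moreover have "(u * (1 - t\<^sup>2) + 2 * v * t) * q\<^sup>2 = u * (q\<^sup>2 - (c - a)\<^sup>2) + 2 * v * (c - a) * q"
      "(w * (1 + t\<^sup>2)) * q\<^sup>2 = w * (q\<^sup>2 + (c - a)\<^sup>2)"
      unfolding t_def using q by (simp_all add: field_simps power2_eq_square)
    ultimately show ?thesis using that q p by (metis mult_right_cancel power_not_zero less_irrefl)
  qed
  have "a * (q\<^sup>2 - (c - a)\<^sup>2) + 2 * B * (c - a) * q = c * (q\<^sup>2 + (c - a)\<^sup>2)"
    unfolding q_def using D2 by algebra
  then show "a * cos x + b * sin x = c"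
    using halfangle[of a B c] by (simp add: bB algebra_simps)
  have "B * (q\<^sup>2 - (c - a)\<^sup>2) + 2 * (- a) * (c - a) * q = D * (q\<^sup>2 + (c - a)\<^sup>2)"
    unfolding q_def using D2 by algebra
  then show "s * (b * cos x - a * sin x) = sqrt (a\<^sup>2 + b\<^sup>2 - c\<^sup>2)"
    using halfangle[of B "- a" D] by (simp add: D_def bB ss algebra_simps)
qed

lemma trig_equation_solution_unique:
  assumes x: "a * cos x + b * sin x = c" "0 < s * (b * cos x - a * sin x)"
    and y: "a * cos y + b * sin y = c" "0 < s * (b * cos y - a * sin y)"
  shows "\<exists>n::int. x = y + 2 * pi * n"
proof -
  have sq: "(b * cos z - a * sin z)\<^sup>2 = a\<^sup>2 + b\<^sup>2 - (a * cos z + b * sin z)\<^sup>2" for z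
  proof -
    have "(b * cos z - a * sin z)\<^sup>2 + (a * cos z + b * sin z)\<^sup>2
        = (a\<^sup>2 + b\<^sup>2) * ((sin z)\<^sup>2 + (cos z)\<^sup>2)"
      by algebra
    then show ?thesis by simp
  qed
  have "(b * cos x - a * sin x)\<^sup>2 = (b * cos y - a * sin y)\<^sup>2"
    using x(1) y(1) by (simp add: sq)
  then have "b * cos x - a * sin x = b * cos y - a * sin y \<or>
      b * cos x - a * sin x = - (b * cos y - a * sin y)"
    by (simp add: power2_eq_iff)
  moreover have "p = q" if "p = q \<or> p = - q" "0 < s * p" "0 < s * q" for p q :: real
    using that by auto
  ultimately have perp: "b * cos x - a * sin x = b * cos y - a * sin y"
    using x(2) y(2) by blast
  have ab: "a\<^sup>2 + b\<^sup>2 \<noteq> 0"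
    using x(2) by (auto simp: power2_eq_square add_nonneg_eq_0_iff)
  have "(a\<^sup>2 + b\<^sup>2) * cos z = a * (a * cos z + b * sin z) + b * (b * cos z - a * sin z)"
    and "(a\<^sup>2 + b\<^sup>2) * sin z = b * (a * cos z + b * sin z) - a * (b * cos z - a * sin z)" for z
    by (simp_all add: algebra_simps power2_eq_square)
  then have "cos x = cos y" "sin x = sin y"
    using ab x(1) y(1) perp by (metis mult_left_cancel)+
  then show ?thesis
    using sin_cos_eq_iff by blast
qed

section \<open>Analyticity and uniqueness of solution branches\<close>

lemma continuous_on_eq_if_diff_in_2pi_Ints:
  fixes f g :: "real \<Rightarrow> real"
  assumes "connected S" "continuous_on S f" "continuous_on S g"
    and mult: "\<And>x. x \<in> S \<Longrightarrow> \<exists>n::int. f x - g x = 2 * pi * n"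
    and "x0 \<in> S" "f x0 = g x0" "x \<in> S"
  shows "f x = g x"
proof -
  have "(\<lambda>x. f x - g x) constant_on S"
  proof (rule continuous_discrete_range_constant)
    show "continuous_on S (\<lambda>x. f x - g x)"
      using assms(2,3) by (rule continuous_on_diff)
    fix x assume "x \<in> S"
    show "\<exists>e>0. \<forall>y. y \<in> S \<and> f y - g y \<noteq> f x - g x \<longrightarrow> e \<le> norm (f y - g y - (f x - g x))"
    proof (intro exI conjI allI impI)
      fix y assume y: "y \<in> S \<and> f y - g y \<noteq> f x - g x"
      obtain n m :: int where "f y - g y = 2 * pi * n" "f x - g x = 2 * pi * m"
        using mult y \<open>x \<in> S\<close> by meson
      moreover from this y have "1 \<le> \<bar>real_of_int (n - m)\<bar>"
        by (simp del: of_int_diff)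
          (metis of_int_1_le_iff of_int_abs zero_less_abs_iff right_minus_eq int_one_le_iff_zero_less)
      ultimately show "2 * pi \<le> norm (f y - g y - (f x - g x))"
        by (simp add: abs_mult right_diff_distrib[symmetric])
    qed simp
  qed fact
  then show ?thesis
    using assms(5-7) unfolding constant_on_def by (metis eq_iff_diff_eq_0)
qed

lemma real_analytic_on_of_real_restriction:
  fixes f :: "real \<Rightarrow> real"
  assumes "open S"
    and ext: "\<And>x. x \<in> S \<Longrightarrow>
      \<exists>F. F analytic_on {complex_of_real x} \<and> (\<forall>y\<in>S. F (of_real y) = of_real (f y))"
  shows "real_analytic_on f S"
  unfolding real_analytic_on_def
proof
  fix x assume "x \<in> S"
  then obtain F where F: "F analytic_on {of_real x}" "\<And>y. y \<in> S \<Longrightarrow> F (of_real y) = of_real (f y)"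
    using ext by blast
  obtain e where e: "e > 0" "F holomorphic_on ball (of_real x) e"
    using F(1) unfolding analytic_on_def by auto
  obtain r0 where r0: "r0 > 0" "ball x r0 \<subseteq> S"
    using \<open>open S\<close> \<open>x \<in> S\<close> openE by blast
  show "\<exists>r>0. \<exists>c. \<forall>y. \<bar>y - x\<bar> < r \<longrightarrow> (\<lambda>n. c n * (y - x) ^ n) sums f y"
  proof (intro exI conjI allI impI)
    show "min e r0 > 0" using e r0 by simp
    fix y assume y: "\<bar>y - x\<bar> < min e r0"
    then have "y \<in> S" using r0 by (auto simp: dist_real_def)
    have Re_coeff: "Re (w * of_real z / fact n) = Re (w / fact n) * z" for w :: complex and z n
      using Re_divide_of_real[of "w * of_real z" "fact n"] Re_divide_of_real[of w "fact n"]
      by (simp only: of_real_fact) simp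
    have "of_real y \<in> ball (of_real x :: complex) e"
      using y by (simp add: dist_norm abs_minus_commute flip: of_real_diff)
    from sums_Re[OF holomorphic_power_series[OF e(2) this]]
    show "(\<lambda>n. Re ((deriv ^^ n) F (of_real x) / fact n) * (y - x) ^ n) sums f y"
      unfolding F(2)[OF \<open>y \<in> S\<close>] by (simp add: Re_coeff flip: of_real_diff of_real_power)
  qed
qed

lemma real_analytic_on_trig_root:
  fixes a b c :: "real \<Rightarrow> real" and A B C :: "complex \<Rightarrow> complex"
  assumes "open S" and an: "A analytic_on UNIV" "B analytic_on UNIV" "C analytic_on UNIV"
    and re: "\<And>y. A (of_real y) = of_real (a y)" "\<And>y. B (of_real y) = of_real (b y)"
      "\<And>y. C (of_real y) = of_real (c y)"
    and cond: "\<And>\<theta>. \<theta> \<in> S \<Longrightarrow> 0 < s * b \<theta> \<and> (c \<theta>)\<^sup>2 < (a \<theta>)\<^sup>2 + (b \<theta>)\<^sup>2"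
  shows "real_analytic_on (\<lambda>\<theta>. trig_root s (a \<theta>) (b \<theta>) (c \<theta>)) S"
proof (rule real_analytic_on_of_real_restriction[OF \<open>open S\<close>])
  define E where "E z = (A z)\<^sup>2 + (B z)\<^sup>2 - (C z)\<^sup>2" for z
  define G where "G z = (C z - A z) / (of_real s * B z + csqrt (E z))" for z
  have E_real: "E (of_real y) = of_real ((a y)\<^sup>2 + (b y)\<^sup>2 - (c y)\<^sup>2)" for y
    by (simp add: E_def re)
  have G_real:
    "G (of_real y) = of_real ((c y - a y) / (s * b y + sqrt ((a y)\<^sup>2 + (b y)\<^sup>2 - (c y)\<^sup>2)))"
    if "y \<in> S" for y
    using cond[OF that] by (simp add: G_def E_real csqrt_of_real re)
  fix x assume "x \<in> S"
  have pos: "0 < (a x)\<^sup>2 + (b x)\<^sup>2 - (c x)\<^sup>2" "0 < s * b x + sqrt ((a x)\<^sup>2 + (b x)\<^sup>2 - (c x)\<^sup>2)"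
    using cond[OF \<open>x \<in> S\<close>] by (auto simp: add_pos_nonneg)
  have ABC: "A analytic_on {of_real x}" "B analytic_on {of_real x}" "C analytic_on {of_real x}"
    using an analytic_on_subset by blast+
  have "E analytic_on {of_real x}"
    unfolding E_def using ABC by (intro analytic_intros)
  then have sqrt: "(\<lambda>z. csqrt (E z)) analytic_on {of_real x}"
    by (rule analytic_on_csqrt') (use pos in \<open>auto simp: E_real complex_nonpos_Reals_iff\<close>)
  have "of_real s * B (of_real x) + csqrt (E (of_real x)) \<noteq> 0"
    using pos by (simp add: E_real csqrt_of_real re flip: of_real_mult of_real_add)
  then have "G analytic_on {of_real x}"
    unfolding G_def
    by (intro analytic_on_divide analytic_on_diff analytic_on_add analytic_on_mult analytic_on_const
        ABC sqrt) auto
  moreover have "Arctan analytic_on {z. \<bar>Im z\<bar> < 1}"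
  proof -
    have "open {z::complex. \<bar>Im z\<bar> < 1}"
      by (intro open_Collect_less continuous_intros)
    then show ?thesis
      by (simp add: analytic_on_open) (rule holomorphic_on_Arctan; simp)
  qed
  ultimately have "(\<lambda>z. of_real s * 2 * Arctan (G z)) analytic_on {of_real x}"
    using G_real[OF \<open>x \<in> S\<close>]
    by (intro analytic_intros analytic_on_compose_gen[of G _ Arctan, unfolded o_def]) auto
  moreover have "of_real s * 2 * Arctan (G (of_real y)) = of_real (trig_root s (a y) (b y) (c y))"
    if "y \<in> S" for y
    unfolding G_real[OF that] Arctan_of_real trig_root_def by simp
  ultimately show "\<exists>F. F analytic_on {complex_of_real x} \<and>
      (\<forall>y\<in>S. F (of_real y) = of_real (trig_root s (a y) (b y) (c y)))"
    by blast
qed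

section \<open>Rotations\<close>

definition axial :: "real^3 \<Rightarrow> real^3 \<Rightarrow> real^3" where
  "axial t v = ((t \<bullet> v) / (norm t)\<^sup>2) *\<^sub>R t"

lemma rot_eq:
  "rot t \<phi> v = axial t v + cos \<phi> *\<^sub>R (v - axial t v) + sin \<phi> *\<^sub>R (cross3 t v /\<^sub>R norm t)"
  unfolding rot_def axial_def by (simp add: divide_inverse_commute)

lemma rot_0 [simp]: "rot t 0 v = v"
  by (simp add: rot_def)

lemma inner_rot:
  "rot t \<phi> v \<bullet> w =
    axial t v \<bullet> w + cos \<phi> * ((v - axial t v) \<bullet> w) + sin \<phi> * ((cross3 t v /\<^sub>R norm t) \<bullet> w)"
  unfolding rot_eq by (simp add: inner_add_left)

lemma cross_rot:
  assumes "t \<noteq> 0"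
  shows "cross3 t (rot t \<phi> v) =
    norm t *\<^sub>R (cos \<phi> *\<^sub>R (cross3 t v /\<^sub>R norm t) - sin \<phi> *\<^sub>R (v - axial t v))"
proof -
  have n: "norm t \<noteq> 0" using assms by simp
  have "cross3 t (rot t \<phi> v) = cos \<phi> *\<^sub>R cross3 t v + (sin \<phi> / norm t) *\<^sub>R cross3 t (cross3 t v)"
    unfolding rot_eq axial_def
    by (simp add: cross_add_right cross_mult_right Cross3.right_diff_distrib divide_inverse_commute)
  also have "cross3 t (cross3 t v) = - (norm t)\<^sup>2 *\<^sub>R (v - axial t v)"
    using Lagrange[of t t v] n by (simp add: axial_def power2_norm_eq_inner algebra_simps)
  finally show ?thesis
    using n by (simp add: algebra_simps power2_eq_square)
qed

lemma rot_has_vector_derivative: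
  assumes "t \<noteq> 0"
  shows "((\<lambda>\<phi>. rot t \<phi> v) has_vector_derivative cross3 t (rot t \<phi> v) /\<^sub>R norm t) (at \<phi> within S)"
proof -
  have "((\<lambda>\<phi>. rot t \<phi> v) has_vector_derivative
      cos \<phi> *\<^sub>R (cross3 t v /\<^sub>R norm t) - sin \<phi> *\<^sub>R (v - axial t v)) (at \<phi> within S)"
    unfolding rot_eq by (auto intro!: derivative_eq_intros simp: algebra_simps)
  then show ?thesis
    using assms by (simp add: cross_rot)
qed

lemma triple_eq_cross_inner: "triple a b c = cross3 a b \<bullet> c"
  unfolding triple_def using cross_triple[of a b c] by (simp add: inner_commute)

lemma rot_level_curve_derivative:
  fixes \<gamma> :: "real \<Rightarrow> real"
  assumes "t1 \<noteq> 0" "t4 \<noteq> 0" "open S" "\<theta> \<in> S"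
    and \<gamma>: "(\<gamma> has_real_derivative d) (at \<theta>)"
    and level: "\<And>y. y \<in> S \<Longrightarrow> rot t1 (\<gamma> y) t2 \<bullet> rot t4 y t3 = k"
    and nz: "triple t1 (rot t1 (\<gamma> \<theta>) t2) (rot t4 \<theta> t3) \<noteq> 0"
  shows "d = (norm t1 / norm t4) *
    (triple (rot t1 (\<gamma> \<theta>) t2) (rot t4 \<theta> t3) t4 / triple t1 (rot t1 (\<gamma> \<theta>) t2) (rot t4 \<theta> t3))"
proof -
  define u where "u = rot t1 (\<gamma> \<theta>) t2"
  define w where "w = rot t4 \<theta> t3"
  have Du: "((\<lambda>y. rot t1 (\<gamma> y) t2) has_vector_derivative d *\<^sub>R (cross3 t1 u /\<^sub>R norm t1)) (at \<theta>)"
    using vector_diff_chain_at[of \<gamma> d \<theta> "\<lambda>\<phi>. rot t1 \<phi> t2",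
        OF \<gamma>[unfolded has_real_derivative_iff_has_vector_derivative]
          rot_has_vector_derivative[OF assms(1)]]
    by (simp add: o_def u_def)
  have Dw: "((\<lambda>y. rot t4 y t3) has_vector_derivative cross3 t4 w /\<^sub>R norm t4) (at \<theta>)"
    unfolding w_def by (rule rot_has_vector_derivative[OF assms(2)])
  have "((\<lambda>y. rot t1 (\<gamma> y) t2 \<bullet> rot t4 y t3) has_real_derivative
      u \<bullet> (cross3 t4 w /\<^sub>R norm t4) + (d *\<^sub>R (cross3 t1 u /\<^sub>R norm t1)) \<bullet> w) (at \<theta>)"
    unfolding has_field_derivative_def
    by (rule has_derivative_eq_rhs[OF has_derivative_inner[OF Du[unfolded has_vector_derivative_def]
          Dw[unfolded has_vector_derivative_def]]]) (simp add: fun_eq_iff algebra_simps u_def w_def)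
  moreover have "((\<lambda>y. rot t1 (\<gamma> y) t2 \<bullet> rot t4 y t3) has_real_derivative 0) (at \<theta>)"
    using level
    by (intro has_field_derivative_transform_within_open[OF DERIV_const \<open>open S\<close> \<open>\<theta> \<in> S\<close>]) auto
  ultimately have "u \<bullet> (cross3 t4 w /\<^sub>R norm t4) + (d *\<^sub>R (cross3 t1 u /\<^sub>R norm t1)) \<bullet> w = 0"
    by (rule DERIV_unique)
  then have "d * triple t1 u w / norm t1 = triple u w t4 / norm t4"
    using cross_skew[of t4 w]
    by (simp add: triple_eq_cross_inner[of t1] triple_def[of u] divide_inverse_commute algebra_simps)
  then show ?thesis
    using nz assms(1,2) unfolding u_def[symmetric] w_def[symmetric] by (simp add: field_simps)
qed

lemma isCont_rot: "isCont g \<theta> \<Longrightarrow> isCont (\<lambda>\<theta>. rot t (g \<theta>) v) \<theta>"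
  unfolding rot_eq by (intro continuous_intros)

lemma isCont_triple:
  "isCont a \<theta> \<Longrightarrow> isCont b \<theta> \<Longrightarrow> isCont c \<theta> \<Longrightarrow> isCont (\<lambda>\<theta>. triple (a \<theta>) (b \<theta>) (c \<theta>)) \<theta>"
  unfolding triple_def by (intro continuous_intros continuous_cross)

lemma isCont_f_mv:
  assumes "isCont g \<theta>"
  shows "isCont (\<lambda>\<theta>. f_mv t1 t2 t3 t4 (g \<theta>) \<theta> i) \<theta>"
proof -
  have "isCont (\<lambda>\<theta>. t2d t1 t2 (g \<theta>)) \<theta>" "isCont (\<lambda>\<theta>. t3d t4 t3 \<theta>) \<theta>"
    unfolding t2d_def t3d_def using assms by (simp_all add: isCont_rot)
  then show ?thesis
    unfolding f_mv_def Let_def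
    by (cases "i = 0"; cases "i = 1"; cases "i = 2") (simp_all add: isCont_triple)
qed

lemma entire_extension_inner_rot:
  "\<exists>F. F analytic_on UNIV \<and> (\<forall>y. F (of_real y) = of_real (k + rot t y v \<bullet> w))"
proof (intro exI conjI allI)
  let ?F = "\<lambda>z. of_real (k + axial t v \<bullet> w) + of_real ((v - axial t v) \<bullet> w) * cos z
    + of_real ((cross3 t v /\<^sub>R norm t) \<bullet> w) * sin z"
  show "?F analytic_on UNIV"
    by (intro analytic_intros)
  show "?F (of_real y) = of_real (k + rot t y v \<bullet> w)" for y
  proof -
    have "k + rot t y v \<bullet> w = (k + axial t v \<bullet> w) + ((v - axial t v) \<bullet> w) * cos y
        + ((cross3 t v /\<^sub>R norm t) \<bullet> w) * sin y"
      by (simp add: inner_rot algebra_simps)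
    then show ?thesis
      by (simp only: of_real_add of_real_mult cos_of_real sin_of_real)
  qed
qed

section \<open>The compatible branch\<close>

locale nondegenerate_quadruple =
  fixes t1 t2 t3 t4 :: "real^3"
  assumes triple_123: "triple t1 t2 t3 \<noteq> 0" and triple_234: "triple t2 t3 t4 \<noteq> 0"
    and triple_341: "triple t3 t4 t1 \<noteq> 0" and triple_412: "triple t4 t1 t2 \<noteq> 0"
begin

lemma t1_nonzero: "t1 \<noteq> 0" and t4_nonzero: "t4 \<noteq> 0"
  using triple_123 triple_234 by (auto simp: triple_def)

lemma f_mv_0_pos: "0 < f_mv t1 t2 t3 t4 0 0 i"
  using triple_123 triple_234 triple_341 triple_412
  by (simp add: f_mv_def t2d_def t3d_def Let_def flip: power2_eq_square)

definition cos_coeff :: "real \<Rightarrow> real" where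
  "cos_coeff \<theta> = t3d t4 t3 \<theta> \<bullet> (t2 - axial t1 t2)"

definition sin_coeff :: "real \<Rightarrow> real" where
  "sin_coeff \<theta> = t3d t4 t3 \<theta> \<bullet> (cross3 t1 t2 /\<^sub>R norm t1)"

definition rhs_coeff :: "real \<Rightarrow> real" where
  "rhs_coeff \<theta> = t2 \<bullet> t3 - t3d t4 t3 \<theta> \<bullet> axial t1 t2"

lemma f_comp_eq: "f_comp t1 t2 t3 t4 x \<theta> = cos_coeff \<theta> * cos x + sin_coeff \<theta> * sin x - rhs_coeff \<theta>"
  unfolding f_comp_def t2d_def inner_rot cos_coeff_def sin_coeff_def rhs_coeff_def
  by (simp add: inner_commute)

lemma triple_t2d_eq:
  "triple t1 (t2d t1 t2 x) (t3d t4 t3 \<theta>) = norm t1 * (sin_coeff \<theta> * cos x - cos_coeff \<theta> * sin x)"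
  unfolding triple_eq_cross_inner t2d_def cross_rot[OF t1_nonzero] sin_coeff_def cos_coeff_def
  by (simp add: inner_commute algebra_simps)

lemma continuous_coeffs:
  "continuous_on UNIV cos_coeff" "continuous_on UNIV sin_coeff" "continuous_on UNIV rhs_coeff"
  unfolding cos_coeff_def sin_coeff_def rhs_coeff_def t3d_def inner_rot
  by (intro continuous_intros)+

definition orientation :: real where
  "orientation = sgn (triple t1 t2 t3)"

definition regular :: "real \<Rightarrow> bool" where
  "regular \<theta> \<longleftrightarrow> 0 < orientation * sin_coeff \<theta> \<and> (rhs_coeff \<theta>)\<^sup>2 < (cos_coeff \<theta>)\<^sup>2 + (sin_coeff \<theta>)\<^sup>2"

definition branch :: "real \<Rightarrow> real" where
  "branch \<theta> = trig_root orientation (cos_coeff \<theta>) (sin_coeff \<theta>) (rhs_coeff \<theta>)"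

lemma orientation_pos_iff: "0 < orientation * x \<longleftrightarrow> 0 < x * triple t1 t2 t3"
  using triple_123 by (auto simp: orientation_def sgn_if zero_less_mult_iff)

lemma regular_0: "regular 0" and branch_0: "branch 0 = 0"
proof -
  have "f_comp t1 t2 t3 t4 0 0 = 0" by (simp add: f_comp_def t2d_def t3d_def)
  then have cos_rhs: "cos_coeff 0 = rhs_coeff 0" by (simp add: f_comp_eq)
  have T: "triple t1 t2 t3 = norm t1 * sin_coeff 0"
    using triple_t2d_eq[of 0 0] by (simp add: t2d_def t3d_def)
  then have "0 < norm t1 * (sin_coeff 0)\<^sup>2"
    using t1_nonzero triple_123 by simp
  then have "0 < orientation * sin_coeff 0"
    unfolding orientation_pos_iff T by (simp add: power2_eq_square mult.left_commute)
  then show "regular 0"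
    by (auto simp: regular_def cos_rhs zero_less_mult_iff)
  show "branch 0 = 0"
    by (simp add: branch_def cos_rhs)
qed

lemma open_regular: "open {\<theta>. regular \<theta>}"
  unfolding regular_def using continuous_coeffs
  by (intro open_Collect_conj open_Collect_less continuous_intros)
    (auto simp: continuous_on_eq_continuous_at)

lemma f_mv_0_pos_iff:
  "0 < f_mv t1 t2 t3 t4 x \<theta> 0 \<longleftrightarrow> 0 < orientation * (sin_coeff \<theta> * cos x - cos_coeff \<theta> * sin x)"
proof -
  have "f_mv t1 t2 t3 t4 x \<theta> 0 =
      norm t1 * ((sin_coeff \<theta> * cos x - cos_coeff \<theta> * sin x) * triple t1 t2 t3)"
    by (simp add: f_mv_def triple_t2d_eq)
  then show ?thesis
    unfolding orientation_pos_iff using t1_nonzero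
    by (metis mult_pos_pos zero_less_mult_pos zero_less_norm_iff)
qed

lemma branch_solves:
  assumes "regular \<theta>"
  shows "f_comp t1 t2 t3 t4 (branch \<theta>) \<theta> = 0" and "0 < f_mv t1 t2 t3 t4 (branch \<theta>) \<theta> 0"
proof -
  have "\<bar>orientation\<bar> = 1" using triple_123 by (simp add: orientation_def abs_sgn)
  note root = trig_root[OF this, of "sin_coeff \<theta>" "rhs_coeff \<theta>" "cos_coeff \<theta>"]
  show "f_comp t1 t2 t3 t4 (branch \<theta>) \<theta> = 0"
    using root(1) assms by (simp add: f_comp_eq branch_def regular_def)
  show "0 < f_mv t1 t2 t3 t4 (branch \<theta>) \<theta> 0"
    using root(2) assms by (simp add: f_mv_0_pos_iff branch_def regular_def)
qed

lemma coeffs_differentiable: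
  "\<exists>d. (cos_coeff has_real_derivative d) (at \<theta>)"
  "\<exists>d. (sin_coeff has_real_derivative d) (at \<theta>)"
  "\<exists>d. (rhs_coeff has_real_derivative d) (at \<theta>)"
  unfolding cos_coeff_def sin_coeff_def rhs_coeff_def t3d_def inner_rot
  by (intro exI; auto intro!: derivative_eq_intros)+

lemma branch_differentiable:
  assumes "regular \<theta>"
  shows "\<exists>d. (branch has_real_derivative d) (at \<theta>)"
proof -
  obtain d1 d2 d3 where "(cos_coeff has_real_derivative d1) (at \<theta>)"
    "(sin_coeff has_real_derivative d2) (at \<theta>)" "(rhs_coeff has_real_derivative d3) (at \<theta>)"
    using coeffs_differentiable by metis
  moreover
  have "0 < orientation * sin_coeff \<theta> + sqrt ((cos_coeff \<theta>)\<^sup>2 + (sin_coeff \<theta>)\<^sup>2 - (rhs_coeff \<theta>)\<^sup>2)"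
    using assms by (simp add: regular_def add_pos_nonneg)
  moreover have "0 < (cos_coeff \<theta>)\<^sup>2 + (sin_coeff \<theta>)\<^sup>2 - (rhs_coeff \<theta>)\<^sup>2"
    using assms by (simp add: regular_def)
  ultimately show ?thesis
    unfolding branch_def[abs_def] trig_root_def by (intro exI) (auto intro!: derivative_eq_intros)
qed

lemma isCont_branch: "regular \<theta> \<Longrightarrow> isCont branch \<theta>"
  using branch_differentiable DERIV_isCont by blast

lemma eventually_regular_f_mv_pos:
  "eventually (\<lambda>\<theta>. regular \<theta> \<and> (\<forall>i<4. 0 < f_mv t1 t2 t3 t4 (branch \<theta>) \<theta> i)) (nhds 0)"
proof -
  have "eventually regular (nhds 0)"
    using eventually_nhds_in_open[OF open_regular] regular_0 by simp
  moreover have "eventually (\<lambda>\<theta>. 0 < f_mv t1 t2 t3 t4 (branch \<theta>) \<theta> i) (nhds 0)" for i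
  proof -
    have "isCont (\<lambda>\<theta>. f_mv t1 t2 t3 t4 (branch \<theta>) \<theta> i) 0"
      by (rule isCont_f_mv[OF isCont_branch[OF regular_0]])
    then have "((\<lambda>\<theta>. f_mv t1 t2 t3 t4 (branch \<theta>) \<theta> i) \<longlongrightarrow> f_mv t1 t2 t3 t4 (branch 0) 0 i) (nhds 0)"
      using tendsto_at_iff_tendsto_nhds[of "\<lambda>\<theta>. f_mv t1 t2 t3 t4 (branch \<theta>) \<theta> i" 0]
      by (simp add: isCont_def)
    then show ?thesis
      by (rule order_tendstoD) (simp add: branch_0 f_mv_0_pos)
  qed
  then have "eventually (\<lambda>\<theta>. \<forall>i\<in>{..<4}. 0 < f_mv t1 t2 t3 t4 (branch \<theta>) \<theta> i) (nhds 0)"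
    by (intro eventually_ball_finite) auto
  ultimately show ?thesis
    by eventually_elim auto
qed

definition branch_slope :: "real \<Rightarrow> real" where
  "branch_slope \<theta> = (norm t1 / norm t4) *
     (triple (t2d t1 t2 (branch \<theta>)) (t3d t4 t3 \<theta>) t4
      / triple t1 (t2d t1 t2 (branch \<theta>)) (t3d t4 t3 \<theta>))"

lemma triple_branch_nonzero: "regular \<theta> \<Longrightarrow> triple t1 (t2d t1 t2 (branch \<theta>)) (t3d t4 t3 \<theta>) \<noteq> 0"
  using branch_solves(2) by (fastforce simp: f_mv_def)

lemma branch_has_derivative:
  assumes "regular \<theta>"
  shows "(branch has_real_derivative branch_slope \<theta>) (at \<theta>)"
proof -
  obtain d where d: "(branch has_real_derivative d) (at \<theta>)"
    using branch_differentiable[OF assms] by blast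
  have "rot t1 (branch y) t2 \<bullet> rot t4 y t3 = t2 \<bullet> t3" if "y \<in> {\<theta>. regular \<theta>}" for y
    using branch_solves(1)[of y] that by (simp add: f_comp_def t2d_def t3d_def)
  from rot_level_curve_derivative[OF t1_nonzero t4_nonzero open_regular _ d this]
  have "d = branch_slope \<theta>"
    using assms triple_branch_nonzero[OF assms] by (simp add: branch_slope_def t2d_def t3d_def)
  then show ?thesis using d by simp
qed

lemma branch_C1: "branch C1_differentiable_on {\<theta>. regular \<theta>}"
proof -
  have "isCont branch_slope \<theta>" if "regular \<theta>" for \<theta>
  proof -
    have "isCont (\<lambda>\<theta>. t2d t1 t2 (branch \<theta>)) \<theta>" "isCont (\<lambda>\<theta>. t3d t4 t3 \<theta>) \<theta>"
      unfolding t2d_def t3d_def using isCont_branch[OF that] by (simp_all add: isCont_rot)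
    then show ?thesis
      using triple_branch_nonzero[OF that] unfolding branch_slope_def triple_def
      by (intro continuous_intros continuous_cross) auto
  qed
  then show ?thesis
    unfolding C1_differentiable_on_def has_real_derivative_iff_has_vector_derivative[symmetric]
    using branch_has_derivative by (blast intro: continuous_at_imp_continuous_on)
qed

lemma branch_unique:
  assumes "connected S" "0 \<in> S" "S \<subseteq> {\<theta>. regular \<theta>}" "continuous_on S g" "g 0 = 0"
    and sol: "\<And>\<theta>. \<theta> \<in> S \<Longrightarrow> f_comp t1 t2 t3 t4 (g \<theta>) \<theta> = 0 \<and> 0 < f_mv t1 t2 t3 t4 (g \<theta>) \<theta> 0"
    and "\<theta> \<in> S"
  shows "g \<theta> = branch \<theta>"
proof (rule continuous_on_eq_if_diff_in_2pi_Ints[OF assms(1,4) _ _ assms(2) _ assms(7)])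
  show "continuous_on S branch"
    using assms(3) isCont_branch by (blast intro: continuous_at_imp_continuous_on)
  show "g 0 = branch 0" using assms(5) branch_0 by simp
  fix x assume "x \<in> S"
  then have "regular x" using assms(3) by blast
  show "\<exists>n::int. g x - branch x = 2 * pi * n"
    using trig_equation_solution_unique[of "cos_coeff x" "g x" "sin_coeff x" "rhs_coeff x" orientation
        "branch x"]
      sol[OF \<open>x \<in> S\<close>] branch_solves[OF \<open>regular x\<close>]
    by (force simp: f_comp_eq f_mv_0_pos_iff)
qed

lemma real_analytic_on_branch:
  assumes "open S" "S \<subseteq> {\<theta>. regular \<theta>}"
  shows "real_analytic_on branch S"
proof -
  have cos: "cos_coeff y = 0 + t3d t4 t3 y \<bullet> (t2 - axial t1 t2)"
    and sin: "sin_coeff y = 0 + t3d t4 t3 y \<bullet> (cross3 t1 t2 /\<^sub>R norm t1)"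
    and rhs: "rhs_coeff y = t2 \<bullet> t3 + t3d t4 t3 y \<bullet> - axial t1 t2" for y
    by (simp_all add: cos_coeff_def sin_coeff_def rhs_coeff_def)
  obtain A B C where "A analytic_on UNIV" "B analytic_on UNIV" "C analytic_on UNIV"
    "\<And>y. A (of_real y) = of_real (cos_coeff y)" "\<And>y. B (of_real y) = of_real (sin_coeff y)"
    "\<And>y. C (of_real y) = of_real (rhs_coeff y)"
    unfolding cos sin rhs t3d_def using entire_extension_inner_rot by metis
  from real_analytic_on_trig_root[OF assms(1) this] assms(2)
  show ?thesis
    unfolding branch_def[abs_def] regular_def by blast
qed

end

theorem lemmaA1:
  fixes t1 t2 t3 t4 :: "real^3"
  assumes "triple t1 t2 t3 \<noteq> 0" and "triple t2 t3 t4 \<noteq> 0"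
    and "triple t3 t4 t1 \<noteq> 0" and "triple t4 t1 t2 \<noteq> 0"
  shows "\<exists>thm thp. thm < 0 \<and> 0 < thp \<and>
    (\<exists>\<gamma>::real \<Rightarrow> real.
       (\<gamma> C1_differentiable_on {thm<..<thp} \<and> \<gamma> 0 = 0 \<and>
        (\<forall>\<theta>\<in>{thm<..<thp}. f_comp t1 t2 t3 t4 (\<gamma> \<theta>) \<theta> = 0 \<and>
                             (\<forall>i<4. f_mv t1 t2 t3 t4 (\<gamma> \<theta>) \<theta> i > 0)))
     \<and> (\<forall>\<gamma>'::real \<Rightarrow> real.
          (\<gamma>' C1_differentiable_on {thm<..<thp} \<and> \<gamma>' 0 = 0 \<and>
           (\<forall>\<theta>\<in>{thm<..<thp}. f_comp t1 t2 t3 t4 (\<gamma>' \<theta>) \<theta> = 0 \<and>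
                                (\<forall>i<4. f_mv t1 t2 t3 t4 (\<gamma>' \<theta>) \<theta> i > 0)))
          \<longrightarrow> (\<forall>\<theta>\<in>{thm<..<thp}. \<gamma>' \<theta> = \<gamma> \<theta>))
     \<and> real_analytic_on \<gamma> {thm<..<thp}
     \<and> (\<forall>\<theta>\<in>{thm<..<thp}.
          deriv \<gamma> \<theta> = (norm t1 / norm t4) *
            (triple (t2d t1 t2 (\<gamma> \<theta>)) (t3d t4 t3 \<theta>) t4
             / triple t1 (t2d t1 t2 (\<gamma> \<theta>)) (t3d t4 t3 \<theta>))))"
proof -
  interpret nondegenerate_quadruple t1 t2 t3 t4
    using assms by unfold_locales
  obtain \<delta> where "\<delta> > 0" and \<delta>: "\<And>\<theta>. \<theta> \<in> {-\<delta><..<\<delta>} \<Longrightarrow>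
      regular \<theta> \<and> (\<forall>i<4. 0 < f_mv t1 t2 t3 t4 (branch \<theta>) \<theta> i)"
    using eventually_regular_f_mv_pos unfolding eventually_nhds_metric
    by (metis dist_real_def diff_zero abs_less_iff greaterThanLessThan_iff minus_less_iff)
  define S where "S = {-\<delta><..<\<delta>}"
  have S: "open S" "connected S" "0 \<in> S" "S \<subseteq> {\<theta>. regular \<theta>}"
    using \<delta> \<open>\<delta> > 0\<close> by (auto simp: S_def)
  have "\<forall>\<theta>\<in>S. g \<theta> = branch \<theta>"
    if "g C1_differentiable_on S \<and> g 0 = 0 \<and>
        (\<forall>\<theta>\<in>S. f_comp t1 t2 t3 t4 (g \<theta>) \<theta> = 0 \<and> (\<forall>i<4. 0 < f_mv t1 t2 t3 t4 (g \<theta>) \<theta> i))" for g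
    using that branch_unique[OF S(2-4) C1_differentiable_imp_continuous_on] by simp
  moreover have "deriv branch \<theta> = branch_slope \<theta>" if "\<theta> \<in> S" for \<theta>
    using branch_has_derivative S(4) that by (blast intro: DERIV_imp_deriv)
  ultimately show ?thesis
    using \<open>\<delta> > 0\<close> S branch_0 branch_solves(1) \<delta>
      C1_differentiable_on_subset[OF branch_C1] real_analytic_on_branch[OF S(1,4)]
    by (intro exI[of _ "-\<delta>"] exI[of _ \<delta>] conjI exI[of _ branch]) (auto simp: S_def branch_slope_def)
qed

end
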